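(* Let $n,k\geq 1$ be integers with $n+k$ odd and let $A_1,\dots,A_k,B_1,\dots,B_k\in\mathbb{R}$. For $\alpha\in\mathbb{C}$ put $a_i=A_i+B_i\alpha$ ($i=1,\dots,k$) and $$O_\alpha(z)=z^n\,\frac{a_k+a_{k-1}z+\dots+a_1 z^{k-1}+z^k}{1+a_1 z+\dots+a_{k-1}z^{k-1}+a_k z^k},$$ considered for those $\alpha$ with $a_k\neq0$, $1+a_1+\dots+a_k\neq0$ and $1+\sum_{j=1}^k(-1)^ja_j\neq 0$; for such $\alpha$, $z=-1$ is a fixed point of $O_\alpha$. Define $$C=n+k+\sum_{j=1}^k(-1)^j(n+k-2j)A_j,\quad D=\sum_{j=1}^k(-1)^j(n+k-2j)B_j,\quad C'=1+\sum_{j=1}^k(-1)^jA_j,\quad D'=\sum_{j=1}^k(-1)^jB_j,$$ and, when $D^2-D'^2\neq0$, $c=(CD-C'D')/(D^2-D'^2)$ and $r=(C'D-CD')/(D^2-D'^2)$. Then: \begin{enumerate} \item If $D^2-D'^2\neq0$: (i) $z=-1$ is indifferent on the circle $S:\ |\alpha+c|=|r|$; (ii) $z=-1$ is attracting inside $S$ if $D^2-D'^2>0$ and outside $S$ if $D^2-D'^2<0$; (iii) $z=-1$ is repelling outside $S$ if $D^2-D'^2>0$ and inside $S$ if $D^2-D'^2<0$. \item If $D^2-D'^2=0$: (a) if $D=D'\neq0$: $z=-1$ is indifferent if $C=C'$; $z=-1$ is attracting if either $\mathrm{Re}(\alpha)<-\frac{C+C'}{2D}$ and $D(C-C')>0$,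 or $\mathrm{Re}(\alpha)>-\frac{C+C'}{2D}$ and $D(C-C')<0$; $z=-1$ is repelling otherwise. (b) if $D=-D'\neq0$: $z=-1$ is indifferent if $C=-C'$; $z=-1$ is attracting if either $\mathrm{Re}(\alpha)<\frac{C'-C}{2D}$ and $D(C+C')>0$, or $\mathrm{Re}(\alpha)>\frac{C'-C}{2D}$ and $D(C+C')<0$; $z=-1$ is repelling otherwise. (c) if $D=D'=0$: $z=-1$ is indifferent if $|C|=|C'|$, attracting if $|C|<|C'|$, and repelling if $|C|>|C'|$. \end{enumerate} Moreover, if $\alpha=-C/D$, the fixed point $z=-1$ is superattracting.
   Context: For a fixed point $z_0$ of a rational map $R$ with multiplier $\lambda=R'(z_0)$, $z_0$ is attracting if $|\lambda|<1$, superattracting if $\lambda=0$, repelling if $|\lambda|>1$, and indifferent if $|\lambda|=1$. *)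

theory Defs
  imports "HOL-Analysis.Analysis"
begin

definition attracting_fp :: "(complex \<Rightarrow> complex) \<Rightarrow> complex \<Rightarrow> bool" where
  "attracting_fp R z0 \<longleftrightarrow> R z0 = z0 \<and> cmod (deriv R z0) < 1"

definition superattracting_fp :: "(complex \<Rightarrow> complex) \<Rightarrow> complex \<Rightarrow> bool" where
  "superattracting_fp R z0 \<longleftrightarrow> R z0 = z0 \<and> deriv R z0 = 0"

definition repelling_fp :: "(complex \<Rightarrow> complex) \<Rightarrow> complex \<Rightarrow> bool" where
  "repelling_fp R z0 \<longleftrightarrow> R z0 = z0 \<and> cmod (deriv R z0) > 1"

definition indifferent_fp :: "(complex \<Rightarrow> complex) \<Rightarrow> complex \<Rightarrow> bool" where
  "indifferent_fp R z0 \<longleftrightarrow> R z0 = z0 \<and> cmod (deriv R z0) = 1"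

definition coef :: "(nat \<Rightarrow> real) \<Rightarrow> (nat \<Rightarrow> real) \<Rightarrow> complex \<Rightarrow> nat \<Rightarrow> complex" where
  "coef A B \<alpha> i = complex_of_real (A i) + complex_of_real (B i) * \<alpha>"

definition Omap :: "nat \<Rightarrow> nat \<Rightarrow> (nat \<Rightarrow> real) \<Rightarrow> (nat \<Rightarrow> real) \<Rightarrow> complex \<Rightarrow> complex \<Rightarrow> complex" where
  "Omap n k A B \<alpha> z =
     z ^ n * (((\<Sum>j=1..k. coef A B \<alpha> j * z ^ (k - j)) + z ^ k)
              / (1 + (\<Sum>j=1..k. coef A B \<alpha> j * z ^ j)))"

definition admissible :: "nat \<Rightarrow> (nat \<Rightarrow> real) \<Rightarrow> (nat \<Rightarrow> real) \<Rightarrow> complex \<Rightarrow> bool" where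
  "admissible k A B \<alpha> \<longleftrightarrow>
     coef A B \<alpha> k \<noteq> 0 \<and>
     1 + (\<Sum>j=1..k. coef A B \<alpha> j) \<noteq> 0 \<and>
     1 + (\<Sum>j=1..k. (-1) ^ j * coef A B \<alpha> j) \<noteq> 0"

end

theory Submission
  imports Defs
begin

(* The numerator of O_alpha is the reciprocal of its denominator Q(z) = 1 + a_1 z + ... + a_k z^k:
   away from 0, O_alpha(z) = z^(n+k) Q(1/z) / Q(z). For odd n + k every such map fixes -1 with
   multiplier ((n+k) Q(-1) + 2 Q'(-1)) / Q(-1), which works out to (C + D alpha) / (C' + D' alpha).
   So the type of the fixed point is the sign of
   |C + D alpha|^2 - |C' + D' alpha|^2 = (D^2 - D'^2) |alpha|^2 + 2 (C D - C' D') Re alpha + C^2 - C'^2;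
   completing the square gives the circle S when D^2 <> D'^2, and otherwise the expression is affine
   in Re alpha, or constant. *)

lemma reflected_quotient_has_field_derivative_at_minus_one:
  fixes g :: "complex \<Rightarrow> complex"
  assumes g': "(g has_field_derivative g') (at (-1))" and g0: "g (-1) \<noteq> 0" and "odd m"
  shows "((\<lambda>z. z ^ m * g (inverse z) / g z) has_field_derivative
           (of_nat m * g (-1) + 2 * g') / g (-1)) (at (-1))"
proof -
  have "((\<lambda>z. g (inverse z)) has_field_derivative - g') (at (-1))"
    using DERIV_chain2[where f=g and g=inverse and x="-1", OF _ DERIV_inverse] g' by simp
  from DERIV_divide[OF DERIV_mult[OF DERIV_power[OF DERIV_ident, of m] this] g' g0]
  show ?thesis
    by (rule DERIV_cong) (use g0 \<open>odd m\<close> in \<open>simp add: field_simps power2_eq_square\<close>)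
qed

lemma reversed_sum_eq_power_mult:
  fixes z :: "'a::field"
  assumes "z \<noteq> 0"
  shows "(\<Sum>j=1..k. a j * z ^ (k - j)) + z ^ k = z ^ k * (1 + (\<Sum>j=1..k. a j * inverse z ^ j))"
proof -
  have "(\<Sum>j=1..k. a j * z ^ (k - j)) = (\<Sum>j=1..k. z ^ k * (a j * inverse z ^ j))"
    using assms by (intro sum.cong) (auto simp: power_diff divide_inverse power_inverse)
  then show ?thesis
    by (simp add: sum_distrib_left algebra_simps)
qed

definition Omap_denominator :: "nat \<Rightarrow> (nat \<Rightarrow> real) \<Rightarrow> (nat \<Rightarrow> real) \<Rightarrow> complex \<Rightarrow> complex \<Rightarrow> complex" where
  "Omap_denominator k A B \<alpha> z = 1 + (\<Sum>j=1..k. coef A B \<alpha> j * z ^ j)"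

lemma Omap_eq_reflected_quotient:
  assumes "z \<noteq> 0"
  shows "Omap n k A B \<alpha> z =
           z ^ (n + k) * Omap_denominator k A B \<alpha> (inverse z) / Omap_denominator k A B \<alpha> z"
  using reversed_sum_eq_power_mult[OF assms, where a = "coef A B \<alpha>" and k = k]
  by (simp add: Omap_def Omap_denominator_def power_add)

lemma Omap_denominator_has_field_derivative:
  "(Omap_denominator k A B \<alpha> has_field_derivative
     (\<Sum>j=1..k. coef A B \<alpha> j * of_nat j * z ^ (j - 1))) (at z)"
  unfolding Omap_denominator_def[abs_def]
  by (auto intro!: derivative_eq_intros sum.cong)

lemma Omap_denominator_at_minus_one:
  "Omap_denominator k A B \<alpha> (-1) =
     of_real (1 + (\<Sum>j=1..k. (-1) ^ j * A j)) + of_real (\<Sum>j=1..k. (-1) ^ j * B j) * \<alpha>"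
proof -
  have "Omap_denominator k A B \<alpha> (-1) =
      1 + (\<Sum>j=1..k. of_real ((-1) ^ j * A j) + of_real ((-1) ^ j * B j) * \<alpha>)"
    by (simp add: Omap_denominator_def coef_def algebra_simps)
  then show ?thesis
    by (simp add: of_real_sum sum_distrib_right sum.distrib)
qed

lemma Omap_multiplier_numerator_at_minus_one:
  "of_nat (n + k) * Omap_denominator k A B \<alpha> (-1)
     + 2 * (\<Sum>j=1..k. coef A B \<alpha> j * of_nat j * (-1) ^ (j - 1)) =
   of_real (real n + real k + (\<Sum>j=1..k. (-1) ^ j * (real n + real k - 2 * real j) * A j))
     + of_real (\<Sum>j=1..k. (-1) ^ j * (real n + real k - 2 * real j) * B j) * \<alpha>"
proof -
  have "of_nat (n + k) * Omap_denominator k A B \<alpha> (-1)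
          + 2 * (\<Sum>j=1..k. coef A B \<alpha> j * of_nat j * (-1) ^ (j - 1)) =
        of_nat (n + k) + (\<Sum>j=1..k. of_nat (n + k) * (coef A B \<alpha> j * (-1) ^ j)
          + 2 * (coef A B \<alpha> j * of_nat j * (-1) ^ (j - 1)))"
    by (simp add: Omap_denominator_def sum.distrib sum_distrib_left algebra_simps)
  also have "\<dots> = of_nat (n + k) + (\<Sum>j=1..k.
      of_real ((-1) ^ j * (real n + real k - 2 * real j) * A j)
      + of_real ((-1) ^ j * (real n + real k - 2 * real j) * B j) * \<alpha>)"
  proof (intro arg_cong[where f = "(+) _"] sum.cong refl)
    fix j assume "j \<in> {1..k}"
    then have "(-1::complex) ^ (j - 1) = - ((-1) ^ j)"
      by (cases j) auto
    then show "of_nat (n + k) * (coef A B \<alpha> j * (-1) ^ j) + 2 * (coef A B \<alpha> j * of_nat j * (-1) ^ (j - 1)) =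
        of_real ((-1) ^ j * (real n + real k - 2 * real j) * A j)
        + of_real ((-1) ^ j * (real n + real k - 2 * real j) * B j) * \<alpha>"
      by (simp add: coef_def algebra_simps)
  qed
  finally show ?thesis
    by (simp add: of_real_sum sum_distrib_right sum.distrib)
qed

lemma admissible_imp_Omap_denominator_nonzero:
  "admissible k A B \<alpha> \<Longrightarrow> Omap_denominator k A B \<alpha> (-1) \<noteq> 0"
  by (simp add: admissible_def Omap_denominator_def mult.commute)

lemma Omap_multiplier_at_minus_one:
  fixes C D C' D' :: real
  assumes "odd (n + k)"
    and C: "C = real n + real k + (\<Sum>j=1..k. (-1) ^ j * (real n + real k - 2 * real j) * A j)"
    and D: "D = (\<Sum>j=1..k. (-1) ^ j * (real n + real k - 2 * real j) * B j)"
    and C': "C' = 1 + (\<Sum>j=1..k. (-1) ^ j * A j)"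
    and D': "D' = (\<Sum>j=1..k. (-1) ^ j * B j)"
    and nonzero: "Omap_denominator k A B \<alpha> (-1) \<noteq> 0"
  shows "Omap n k A B \<alpha> (-1) = -1"
    and "deriv (Omap n k A B \<alpha>) (-1) = (of_real C + of_real D * \<alpha>) / (of_real C' + of_real D' * \<alpha>)"
    and "of_real C' + of_real D' * \<alpha> \<noteq> 0"
proof -
  show "of_real C' + of_real D' * \<alpha> \<noteq> 0"
    using nonzero by (simp add: Omap_denominator_at_minus_one C' D')
  let ?Q = "Omap_denominator k A B \<alpha>"
  have reflected: "Omap n k A B \<alpha> z = z ^ (n + k) * ?Q (inverse z) / ?Q z" if "z \<in> - {0}" for z
    using that by (simp add: Omap_eq_reflected_quotient)
  then show "Omap n k A B \<alpha> (-1) = -1"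
    using nonzero \<open>odd (n + k)\<close> by simp
  have "(Omap n k A B \<alpha> has_field_derivative
      (of_nat (n + k) * ?Q (-1) + 2 * (\<Sum>j=1..k. coef A B \<alpha> j * of_nat j * (-1) ^ (j - 1))) / ?Q (-1))
      (at (-1))"
    using reflected_quotient_has_field_derivative_at_minus_one[OF
        Omap_denominator_has_field_derivative nonzero \<open>odd (n + k)\<close>]
    by (rule has_field_derivative_transform_within_open[where S = "- {0}"]) (auto simp: reflected)
  then show "deriv (Omap n k A B \<alpha>) (-1) = (of_real C + of_real D * \<alpha>) / (of_real C' + of_real D' * \<alpha>)"
    unfolding Omap_multiplier_numerator_at_minus_one
    unfolding Omap_denominator_at_minus_one C D C' D'
    by (rule DERIV_imp_deriv)
qed

lemma fixed_point_type_by_multiplier: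
  fixes R :: "complex \<Rightarrow> complex"
  assumes "R z0 = z0" and "deriv R z0 = X / Y" and "Y \<noteq> 0"
  shows "indifferent_fp R z0 \<longleftrightarrow> (cmod X)\<^sup>2 - (cmod Y)\<^sup>2 = 0"
    and "attracting_fp R z0 \<longleftrightarrow> (cmod X)\<^sup>2 - (cmod Y)\<^sup>2 < 0"
    and "repelling_fp R z0 \<longleftrightarrow> (cmod X)\<^sup>2 - (cmod Y)\<^sup>2 > 0"
proof -
  have "cmod (deriv R z0) = cmod X / cmod Y" and "cmod Y > 0"
    using assms by (simp_all add: norm_divide)
  moreover have "cmod X \<le> cmod Y \<longleftrightarrow> (cmod X)\<^sup>2 \<le> (cmod Y)\<^sup>2"
    using abs_le_square_iff[of "cmod X" "cmod Y"] by simp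
  moreover have "cmod X = cmod Y \<longleftrightarrow> (cmod X)\<^sup>2 = (cmod Y)\<^sup>2"
    by (simp add: power2_eq_iff_nonneg)
  ultimately show "indifferent_fp R z0 \<longleftrightarrow> (cmod X)\<^sup>2 - (cmod Y)\<^sup>2 = 0"
    and "attracting_fp R z0 \<longleftrightarrow> (cmod X)\<^sup>2 - (cmod Y)\<^sup>2 < 0"
    and "repelling_fp R z0 \<longleftrightarrow> (cmod X)\<^sup>2 - (cmod Y)\<^sup>2 > 0"
    using assms(1) by (auto simp: indifferent_fp_def attracting_fp_def repelling_fp_def
        divide_less_eq_1 less_divide_eq_1 not_le[symmetric])
qed

lemma norm_sq_diff_of_affine:
  fixes C D C' D' :: real and \<alpha> :: complex
  shows "(cmod (of_real C + of_real D * \<alpha>))\<^sup>2 - (cmod (of_real C' + of_real D' * \<alpha>))\<^sup>2 =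
      (D\<^sup>2 - D'\<^sup>2) * (cmod \<alpha>)\<^sup>2 + 2 * (C * D - C' * D') * Re \<alpha> + C\<^sup>2 - C'\<^sup>2"
  unfolding cmod_power2 by (simp add: power2_eq_square algebra_simps)

lemma complete_square_norm:
  fixes \<Delta> p q :: real and \<alpha> :: complex
  assumes "\<Delta> \<noteq> 0"
  shows "\<Delta> * (cmod \<alpha>)\<^sup>2 + 2 * p * Re \<alpha> + q =
      \<Delta> * ((cmod (\<alpha> + of_real (p / \<Delta>)))\<^sup>2 - (p\<^sup>2 - \<Delta> * q) / \<Delta>\<^sup>2)"
  using assms unfolding cmod_power2 by (simp add: field_simps power2_eq_square)

lemma norm_sq_diff_sign_circle:
  fixes C D C' D' :: real and \<alpha> :: complex
  defines "\<Delta> \<equiv> D\<^sup>2 - D'\<^sup>2"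
    and "G \<equiv> (cmod (of_real C + of_real D * \<alpha>))\<^sup>2 - (cmod (of_real C' + of_real D' * \<alpha>))\<^sup>2"
  assumes "\<Delta> \<noteq> 0"
  shows "cmod (\<alpha> + of_real ((C * D - C' * D') / \<Delta>)) = \<bar>(C' * D - C * D') / \<Delta>\<bar> \<Longrightarrow> G = 0"
    and "cmod (\<alpha> + of_real ((C * D - C' * D') / \<Delta>)) < \<bar>(C' * D - C * D') / \<Delta>\<bar> \<Longrightarrow>
           (if \<Delta> > 0 then G < 0 else G > 0)"
    and "cmod (\<alpha> + of_real ((C * D - C' * D') / \<Delta>)) > \<bar>(C' * D - C * D') / \<Delta>\<bar> \<Longrightarrow>
           (if \<Delta> > 0 then G > 0 else G < 0)"
proof -
  define m where "m = cmod (\<alpha> + of_real ((C * D - C' * D') / \<Delta>))"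
  define r where "r = (C' * D - C * D') / \<Delta>"
  have "(C * D - C' * D')\<^sup>2 - \<Delta> * (C\<^sup>2 - C'\<^sup>2) = (C' * D - C * D')\<^sup>2"
    unfolding \<Delta>_def by algebra
  then have G: "G = \<Delta> * (m\<^sup>2 - r\<^sup>2)"
    using complete_square_norm[OF assms(3), of \<alpha> "C * D - C' * D'" "C\<^sup>2 - C'\<^sup>2"]
    by (simp add: G_def norm_sq_diff_of_affine m_def r_def power_divide flip: \<Delta>_def)
  have "\<bar>m\<bar> = m"
    by (simp add: m_def)
  then have "m = \<bar>r\<bar> \<longleftrightarrow> m\<^sup>2 = r\<^sup>2" and "m < \<bar>r\<bar> \<longleftrightarrow> m\<^sup>2 < r\<^sup>2" and "m > \<bar>r\<bar> \<longleftrightarrow> m\<^sup>2 > r\<^sup>2"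
    using abs_le_square_iff[of m r] abs_le_square_iff[of r m] power2_abs[of m] power2_abs[of r]
    by (metis abs_ge_zero power2_eq_iff_nonneg, linarith+)
  then show "m = \<bar>r\<bar> \<Longrightarrow> G = 0"
    and "m < \<bar>r\<bar> \<Longrightarrow> (if \<Delta> > 0 then G < 0 else G > 0)"
    and "m > \<bar>r\<bar> \<Longrightarrow> (if \<Delta> > 0 then G > 0 else G < 0)"
    using assms(3) by (auto simp: G mult_less_0_iff zero_less_mult_iff)
qed

lemma norm_sq_diff_sign_diagonal:
  fixes C D C' D' :: real and \<alpha> :: complex
  defines "G \<equiv> (cmod (of_real C + of_real D * \<alpha>))\<^sup>2 - (cmod (of_real C' + of_real D' * \<alpha>))\<^sup>2"
  assumes "D = D'" and "D \<noteq> 0"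
  shows "C = C' \<Longrightarrow> G = 0"
    and "(Re \<alpha> < - (C + C') / (2 * D) \<and> D * (C - C') > 0) \<or> (Re \<alpha> > - (C + C') / (2 * D) \<and> D * (C - C') < 0)
           \<Longrightarrow> G < 0"
    and "(Re \<alpha> > - (C + C') / (2 * D) \<and> D * (C - C') > 0) \<or> (Re \<alpha> < - (C + C') / (2 * D) \<and> D * (C - C') < 0)
           \<Longrightarrow> G > 0"
proof -
  define x0 where "x0 = - (C + C') / (2 * D)"
  have G: "G = 2 * (D * (C - C')) * (Re \<alpha> - x0)"
    unfolding G_def norm_sq_diff_of_affine using assms(2,3) by (simp add: x0_def field_simps power2_eq_square)
  show "C = C' \<Longrightarrow> G = 0"
    by (simp add: G)
  show "(Re \<alpha> < x0 \<and> D * (C - C') > 0) \<or> (Re \<alpha> > x0 \<and> D * (C - C') < 0) \<Longrightarrow> G < 0"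
    and "(Re \<alpha> > x0 \<and> D * (C - C') > 0) \<or> (Re \<alpha> < x0 \<and> D * (C - C') < 0) \<Longrightarrow> G > 0"
    unfolding G by (auto simp: mult_less_0_iff zero_less_mult_iff)
qed

lemma norm_sq_diff_sign_antidiagonal:
  fixes C D C' D' :: real and \<alpha> :: complex
  defines "G \<equiv> (cmod (of_real C + of_real D * \<alpha>))\<^sup>2 - (cmod (of_real C' + of_real D' * \<alpha>))\<^sup>2"
  assumes "D = - D'" and "D \<noteq> 0"
  shows "C = - C' \<Longrightarrow> G = 0"
    and "(Re \<alpha> < (C' - C) / (2 * D) \<and> D * (C + C') > 0) \<or> (Re \<alpha> > (C' - C) / (2 * D) \<and> D * (C + C') < 0)
           \<Longrightarrow> G < 0"
    and "(Re \<alpha> > (C' - C) / (2 * D) \<and> D * (C + C') > 0) \<or> (Re \<alpha> < (C' - C) / (2 * D) \<and> D * (C + C') < 0)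
           \<Longrightarrow> G > 0"
proof -
  define x0 where "x0 = (C' - C) / (2 * D)"
  have G: "G = 2 * (D * (C + C')) * (Re \<alpha> - x0)"
    unfolding G_def norm_sq_diff_of_affine using assms(2,3) by (simp add: x0_def field_simps power2_eq_square)
  show "C = - C' \<Longrightarrow> G = 0"
    by (simp add: G)
  show "(Re \<alpha> < x0 \<and> D * (C + C') > 0) \<or> (Re \<alpha> > x0 \<and> D * (C + C') < 0) \<Longrightarrow> G < 0"
    and "(Re \<alpha> > x0 \<and> D * (C + C') > 0) \<or> (Re \<alpha> < x0 \<and> D * (C + C') < 0) \<Longrightarrow> G > 0"
    unfolding G by (auto simp: mult_less_0_iff zero_less_mult_iff)
qed

lemma norm_sq_diff_sign_constant:
  fixes C D C' D' :: real and \<alpha> :: complex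
  defines "G \<equiv> (cmod (of_real C + of_real D * \<alpha>))\<^sup>2 - (cmod (of_real C' + of_real D' * \<alpha>))\<^sup>2"
  assumes "D = 0" and "D' = 0"
  shows "\<bar>C\<bar> = \<bar>C'\<bar> \<Longrightarrow> G = 0" and "\<bar>C\<bar> < \<bar>C'\<bar> \<Longrightarrow> G < 0" and "\<bar>C\<bar> > \<bar>C'\<bar> \<Longrightarrow> G > 0"
proof -
  have G: "G = C\<^sup>2 - C'\<^sup>2"
    using assms(2,3) by (simp add: G_def)
  show "\<bar>C\<bar> = \<bar>C'\<bar> \<Longrightarrow> G = 0"
    using G by (metis power2_abs diff_self)
  show "\<bar>C\<bar> < \<bar>C'\<bar> \<Longrightarrow> G < 0"
    using G abs_le_square_iff[of C' C] by linarith
  show "\<bar>C\<bar> > \<bar>C'\<bar> \<Longrightarrow> G > 0"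
    using G abs_le_square_iff[of C C'] by linarith
qed

theorem proposition3p6:
  fixes n k :: nat and A B :: "nat \<Rightarrow> real"
    and C D C' D' \<Delta> c r :: real
  assumes "n \<ge> 1" and "k \<ge> 1" and "odd (n + k)"
  defines "C \<equiv> real n + real k + (\<Sum>j=1..k. (-1) ^ j * (real n + real k - 2 * real j) * A j)"
      and "D \<equiv> (\<Sum>j=1..k. (-1) ^ j * (real n + real k - 2 * real j) * B j)"
      and "C' \<equiv> 1 + (\<Sum>j=1..k. (-1) ^ j * A j)"
      and "D' \<equiv> (\<Sum>j=1..k. (-1) ^ j * B j)"
      and "\<Delta> \<equiv> D\<^sup>2 - D'\<^sup>2"
      and "c \<equiv> (C * D - C' * D') / \<Delta>"
      and "r \<equiv> (C' * D - C * D') / \<Delta>"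
  shows
    "(\<forall>\<alpha>. admissible k A B \<alpha> \<longrightarrow> Omap n k A B \<alpha> (-1) = -1)
   \<and> (\<Delta> \<noteq> 0 \<longrightarrow> (\<forall>\<alpha>. admissible k A B \<alpha> \<longrightarrow>
        (cmod (\<alpha> + complex_of_real c) = \<bar>r\<bar> \<longrightarrow> indifferent_fp (Omap n k A B \<alpha>) (-1))
      \<and> (cmod (\<alpha> + complex_of_real c) < \<bar>r\<bar> \<longrightarrow>
           (if \<Delta> > 0 then attracting_fp (Omap n k A B \<alpha>) (-1) else repelling_fp (Omap n k A B \<alpha>) (-1)))
      \<and> (cmod (\<alpha> + complex_of_real c) > \<bar>r\<bar> \<longrightarrow>
           (if \<Delta> > 0 then repelling_fp (Omap n k A B \<alpha>) (-1) else attracting_fp (Omap n k A B \<alpha>) (-1)))))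
   \<and> (D = D' \<and> D \<noteq> 0 \<longrightarrow> (\<forall>\<alpha>. admissible k A B \<alpha> \<longrightarrow>
        (C = C' \<longrightarrow> indifferent_fp (Omap n k A B \<alpha>) (-1))
      \<and> ((Re \<alpha> < - (C + C') / (2 * D) \<and> D * (C - C') > 0) \<or> (Re \<alpha> > - (C + C') / (2 * D) \<and> D * (C - C') < 0)
           \<longrightarrow> attracting_fp (Omap n k A B \<alpha>) (-1))
      \<and> ((Re \<alpha> > - (C + C') / (2 * D) \<and> D * (C - C') > 0) \<or> (Re \<alpha> < - (C + C') / (2 * D) \<and> D * (C - C') < 0)
           \<longrightarrow> repelling_fp (Omap n k A B \<alpha>) (-1))))
   \<and> (D = - D' \<and> D \<noteq> 0 \<longrightarrow> (\<forall>\<alpha>. admissible k A B \<alpha> \<longrightarrow>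
        (C = - C' \<longrightarrow> indifferent_fp (Omap n k A B \<alpha>) (-1))
      \<and> ((Re \<alpha> < (C' - C) / (2 * D) \<and> D * (C + C') > 0) \<or> (Re \<alpha> > (C' - C) / (2 * D) \<and> D * (C + C') < 0)
           \<longrightarrow> attracting_fp (Omap n k A B \<alpha>) (-1))
      \<and> ((Re \<alpha> > (C' - C) / (2 * D) \<and> D * (C + C') > 0) \<or> (Re \<alpha> < (C' - C) / (2 * D) \<and> D * (C + C') < 0)
           \<longrightarrow> repelling_fp (Omap n k A B \<alpha>) (-1))))
   \<and> (D = 0 \<and> D' = 0 \<longrightarrow> (\<forall>\<alpha>. admissible k A B \<alpha> \<longrightarrow>
        (\<bar>C\<bar> = \<bar>C'\<bar> \<longrightarrow> indifferent_fp (Omap n k A B \<alpha>) (-1))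
      \<and> (\<bar>C\<bar> < \<bar>C'\<bar> \<longrightarrow> attracting_fp (Omap n k A B \<alpha>) (-1))
      \<and> (\<bar>C\<bar> > \<bar>C'\<bar> \<longrightarrow> repelling_fp (Omap n k A B \<alpha>) (-1))))
   \<and> (D \<noteq> 0 \<and> admissible k A B (complex_of_real (- C / D)) \<longrightarrow>
        superattracting_fp (Omap n k A B (complex_of_real (- C / D))) (-1))"
proof -
  note multiplier = Omap_multiplier_at_minus_one[OF \<open>odd (n + k)\<close>
      C_def[THEN meta_eq_to_obj_eq] D_def[THEN meta_eq_to_obj_eq]
      C'_def[THEN meta_eq_to_obj_eq] D'_def[THEN meta_eq_to_obj_eq]
      admissible_imp_Omap_denominator_nonzero]
  define G where "G \<alpha> = (cmod (of_real C + of_real D * \<alpha>))\<^sup>2 - (cmod (of_real C' + of_real D' * \<alpha>))\<^sup>2"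
    for \<alpha> :: complex
  have type_by_G: "Omap n k A B \<alpha> (-1) = -1"
      "indifferent_fp (Omap n k A B \<alpha>) (-1) \<longleftrightarrow> G \<alpha> = 0"
      "attracting_fp (Omap n k A B \<alpha>) (-1) \<longleftrightarrow> G \<alpha> < 0"
      "repelling_fp (Omap n k A B \<alpha>) (-1) \<longleftrightarrow> G \<alpha> > 0"
    if "admissible k A B \<alpha>" for \<alpha>
    using multiplier[OF that] unfolding G_def by (simp_all add: fixed_point_type_by_multiplier)
  have superattracting: "superattracting_fp (Omap n k A B (of_real (- C / D))) (-1)"
    if "D \<noteq> 0" and "admissible k A B (of_real (- C / D))"
    using multiplier[OF that(2)] that(1) by (simp add: superattracting_fp_def field_simps)
  note circle = norm_sq_diff_sign_circle[where C = C and D = D and C' = C' and D' = D',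
      folded \<Delta>_def, folded c_def r_def G_def]
  note diagonal = norm_sq_diff_sign_diagonal[where C = C and D = D and C' = C' and D' = D', folded G_def]
  note antidiagonal = norm_sq_diff_sign_antidiagonal[where C = C and D = D and C' = C' and D' = D', folded G_def]
  note constant_case = norm_sq_diff_sign_constant[where C = C and D = D and C' = C' and D' = D', folded G_def]
  show ?thesis
    using superattracting by (simp add: type_by_G circle diagonal antidiagonal constant_case)
qed

end
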